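(* Let $l,l'$ be lines intersecting at a point $O$, and let $X,X'$ be two points lying in the same quadrant into which $l,l'$ divide the plane. Let $M$ be the midpoint of $X,X'$, let $Y$ be the intersection of $l$ with the reflection of $l'$ about $M$, and let $Y'$ be the intersection of $l'$ with the reflection of $l$ about $M$, so that $XYX'Y'$ is a (possibly degenerate) parallelogram. Let $\triangle OYY'$ denote the closed triangle (including its boundary). Then: (1) if $\mathrm{disprod}_{l,l'}(X)<\mathrm{disprod}_{l,l'}(X')$, then $X\in\triangle OYY'$ and $X'\notin\triangle OYY'$; (2) if $\mathrm{disprod}_{l,l'}(X)>\mathrm{disprod}_{l,l'}(X')$, then $X\notin\triangle OYY'$ and $X'\in\triangle OYY'$; (3) if $\mathrm{disprod}_{l,l'}(X)=\mathrm{disprod}_{l,l'}(X')$, then $XYX'Y'$ is degenerate, i.e. its four corners lie on a common line.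
   Context: $d_l(X)$ denotes the distance from the point $X$ to the line $l$, and $\mathrm{disprod}_{l,l'}(X)=d_l(X)\cdot d_{l'}(X)$. *)

theory Defs
  imports "HOL-Analysis.Analysis"
begin

type_synonym point = "real^2"

definition is_line :: "point set \<Rightarrow> bool" where
  "is_line L \<longleftrightarrow> (\<exists>p d. d \<noteq> 0 \<and> L = {p + t *\<^sub>R d | t. True})"

definition dist_line :: "point set \<Rightarrow> point \<Rightarrow> real" where
  "dist_line L X = infdist X L"

definition disprod :: "point set \<Rightarrow> point set \<Rightarrow> point \<Rightarrow> real" where
  "disprod L L' X = dist_line L X * dist_line L' X"

definition same_side :: "point set \<Rightarrow> point \<Rightarrow> point \<Rightarrow> bool" where
  "same_side L X X' \<longleftrightarrow> closed_segment X X' \<inter> L = {}"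

definition same_quadrant :: "point set \<Rightarrow> point set \<Rightarrow> point \<Rightarrow> point \<Rightarrow> bool" where
  "same_quadrant L L' X X' \<longleftrightarrow> same_side L X X' \<and> same_side L' X X'"

definition point_reflect :: "point \<Rightarrow> point \<Rightarrow> point" where
  "point_reflect M P = 2 *\<^sub>R M - P"

end

theory Submission
  imports Defs
begin

text \<open>Write \<open>X = O + a d + b e\<close> with \<open>d, e\<close> spanning \<open>l, l'\<close> and pointing into the
  quadrant of \<open>X, X'\<close>, so that \<open>a, b, a', b' > 0\<close>. Then \<open>Y = O + (a + a') d\<close> and
  \<open>Y' = O + (b + b') e\<close>, and \<open>disprod\<close> is a fixed positive multiple of \<open>a b\<close>. In these
  oblique coordinates \<open>X\<close> lies in the triangle \<open>O Y Y'\<close> iff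
  \<open>a / (a + a') + b / (b + b') \<le> 1\<close>, i.e. iff \<open>a b \<le> a' b'\<close>; and if \<open>a b = a' b'\<close>
  then \<open>X\<close> and \<open>X'\<close> both lie on the segment \<open>Y Y'\<close>.\<close>

definition line :: "'a::real_vector \<Rightarrow> 'a \<Rightarrow> 'a set" where
  "line p d = {p + t *\<^sub>R d | t. True}"

definition cross2 :: "point \<Rightarrow> point \<Rightarrow> real" where
  "cross2 x y = x$1 * y$2 - x$2 * y$1"

lemma cross2_simps [simp]:
  "cross2 (x + y) z = cross2 x z + cross2 y z" "cross2 z (x + y) = cross2 z x + cross2 z y"
  "cross2 (x - y) z = cross2 x z - cross2 y z" "cross2 z (x - y) = cross2 z x - cross2 z y"
  "cross2 (c *\<^sub>R x) z = c * cross2 x z" "cross2 z (c *\<^sub>R x) = c * cross2 z x"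
  "cross2 (- x) z = - cross2 x z" "cross2 z (- x) = - cross2 z x"
  "cross2 x x = 0" "cross2 0 z = 0" "cross2 z 0 = 0"
  by (simp_all add: cross2_def algebra_simps)

lemma cross2_anticommute: "cross2 y x = - cross2 x y"
  by (simp add: cross2_def)

lemma norm_point_squared: "norm (x::point) ^ 2 = x$1 ^ 2 + x$2 ^ 2"
  by (simp add: norm_vec_def L2_set_def sum_2)

lemma inner_point: "(x::point) \<bullet> y = x$1 * y$1 + x$2 * y$2"
  by (simp add: inner_vec_def sum_2)

lemma norm_mult_squared_eq: "(norm x * norm y) ^ 2 = cross2 x y ^ 2 + (x \<bullet> y) ^ 2"
  unfolding power_mult_distrib norm_point_squared cross2_def inner_point
  by (simp add: power2_eq_square algebra_simps)

lemma abs_cross2_le: "\<bar>cross2 x y\<bar> \<le> norm x * norm y"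
proof -
  have "(cross2 x y)\<^sup>2 \<le> (norm x * norm y)\<^sup>2"
    using norm_mult_squared_eq[of x y] by simp
  then have "\<bar>cross2 x y\<bar> \<le> \<bar>norm x * norm y\<bar>"
    by (simp only: abs_le_square_iff)
  then show ?thesis by simp
qed

lemma cross2_eq_0_iff_parallel:
  assumes "d \<noteq> 0"
  shows "cross2 d e = 0 \<longleftrightarrow> (\<exists>c. e = c *\<^sub>R d)"
proof
  assume cross: "cross2 d e = 0"
  show "\<exists>c. e = c *\<^sub>R d"
  proof (cases "d$1 = 0")
    case True
    with assms have "d$2 \<noteq> 0" by (auto simp: vec_eq_iff forall_2)
    with True cross have "e = (e$2 / d$2) *\<^sub>R d"
      by (auto simp: vec_eq_iff forall_2 cross2_def)
    then show ?thesis ..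
  next
    case False
    with cross have "e = (e$1 / d$1) *\<^sub>R d"
      by (auto simp: vec_eq_iff forall_2 cross2_def field_simps)
    then show ?thesis ..
  qed
qed auto

lemma line_eq_iff_cross2_eq_0:
  assumes "d \<noteq> 0" "e \<noteq> 0"
  shows "line p d = line p e \<longleftrightarrow> cross2 d e = 0"
proof
  assume "line p d = line p e"
  then have "p + e \<in> line p d"
    unfolding line_def by (auto intro: exI[of _ 1])
  then obtain t where "p + e = p + t *\<^sub>R d"
    unfolding line_def by blast
  then show "cross2 d e = 0" by simp
next
  assume "cross2 d e = 0"
  then obtain c where c: "e = c *\<^sub>R d"
    using cross2_eq_0_iff_parallel assms(1) by blast
  with assms(2) have "c \<noteq> 0" by auto
  have "p + t *\<^sub>R d = p + (t / c) *\<^sub>R e" "p + t *\<^sub>R e = p + (t * c) *\<^sub>R d" for t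
    using \<open>c \<noteq> 0\<close> by (simp_all add: c)
  then show "line p d = line p e"
    unfolding line_def by blast
qed

lemma line_scaleR:
  assumes "c \<noteq> 0"
  shows "line p (c *\<^sub>R d) = line p d"
proof -
  have "p + t *\<^sub>R d = p + (t / c) *\<^sub>R (c *\<^sub>R d)" for t
    using assms by simp
  then show ?thesis
    unfolding line_def by fastforce
qed

lemma is_line_through:
  assumes "is_line L" "q \<in> L"
  obtains d where "d \<noteq> 0" "L = line q d"
proof -
  obtain p d where "d \<noteq> 0" and L: "L = line p d"
    using assms(1) unfolding is_line_def line_def by blast
  moreover obtain t0 where q: "q = p + t0 *\<^sub>R d"
    using assms(2) L unfolding line_def by blast
  moreover have "p + t *\<^sub>R d = q + (t - t0) *\<^sub>R d" "q + t *\<^sub>R d = p + (t + t0) *\<^sub>R d" for t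
    unfolding q by (simp_all add: algebra_simps)
  then have "line p d = line q d"
    unfolding line_def by blast
  ultimately show ?thesis using that by simp
qed

lemma norm_diff_scaleR_squared:
  fixes u d :: "'a::real_inner"
  shows "(norm (u - t *\<^sub>R d))\<^sup>2 = (norm u)\<^sup>2 - 2 * t * (u \<bullet> d) + t\<^sup>2 * (norm d)\<^sup>2"
  unfolding power2_norm_eq_inner
  by (simp add: inner_diff_left inner_diff_right inner_commute power2_eq_square algebra_simps)

lemma infdist_line:
  assumes "d \<noteq> 0"
  shows "infdist X (line p d) = \<bar>cross2 (X - p) d\<bar> / norm d"
proof (rule antisym)
  have "norm d > 0" using assms by simp
  define t0 where "t0 = ((X - p) \<bullet> d) / (norm d)\<^sup>2"
  have "(norm d)\<^sup>2 * (dist X (p + t0 *\<^sub>R d))\<^sup>2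
      = (norm d)\<^sup>2 * ((norm (X - p))\<^sup>2 - 2 * t0 * ((X - p) \<bullet> d) + t0\<^sup>2 * (norm d)\<^sup>2)"
    using norm_diff_scaleR_squared[of "X - p" t0 d] by (simp add: dist_norm diff_diff_eq)
  also have "\<dots> = (norm d * norm (X - p))\<^sup>2 - ((X - p) \<bullet> d)\<^sup>2"
    using \<open>norm d > 0\<close> unfolding t0_def by (simp add: field_simps power2_eq_square)
  also have "\<dots> = (norm d)\<^sup>2 * (\<bar>cross2 (X - p) d\<bar> / norm d)\<^sup>2"
    using norm_mult_squared_eq[of "X - p" d] \<open>norm d > 0\<close>
    by (simp add: mult.commute power_divide)
  finally have "dist X (p + t0 *\<^sub>R d) = \<bar>cross2 (X - p) d\<bar> / norm d"
    using \<open>norm d > 0\<close> by (simp add: power2_eq_iff_nonneg)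
  moreover have "p + t0 *\<^sub>R d \<in> line p d"
    unfolding line_def by blast
  ultimately show "infdist X (line p d) \<le> \<bar>cross2 (X - p) d\<bar> / norm d"
    by (metis infdist_le)
next
  have "\<bar>cross2 (X - p) d\<bar> / norm d \<le> dist X y" if y: "y \<in> line p d" for y
  proof -
    obtain t where y: "y = p + t *\<^sub>R d"
      using y unfolding line_def by blast
    have "cross2 (X - p) d = cross2 (X - y) d"
      by (simp add: y)
    then show ?thesis
      using abs_cross2_le[of "X - y" d] assms by (simp add: dist_norm divide_le_eq)
  qed
  moreover have nonempty: "line p d \<noteq> {}"
    unfolding line_def by blast
  ultimately show "\<bar>cross2 (X - p) d\<bar> / norm d \<le> infdist X (line p d)"
    unfolding infdist_notempty[OF nonempty] by (intro cINF_greatest nonempty)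
qed

lemma cross2_coords_unique:
  assumes "cross2 d e \<noteq> 0" "a *\<^sub>R d + b *\<^sub>R e = a' *\<^sub>R d + b' *\<^sub>R e"
  shows "a = a'" "b = b'"
proof -
  have "a * cross2 d e = a' * cross2 d e" "b * cross2 d e = b' * cross2 d e"
    using arg_cong[OF assms(2), of "\<lambda>x. cross2 x e"] arg_cong[OF assms(2), of "cross2 d"]
    by (simp_all add: cross2_anticommute[of e d])
  then show "a = a'" "b = b'" using assms(1) by simp_all
qed

lemma cross2_coords:
  assumes "cross2 d e \<noteq> 0"
  shows "w = (cross2 w e / cross2 d e) *\<^sub>R d + (cross2 d w / cross2 d e) *\<^sub>R e"
proof -
  have "cross2 w e * d$1 + cross2 d w * e$1 = w$1 * cross2 d e"
    "cross2 w e * d$2 + cross2 d w * e$2 = w$2 * cross2 d e"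
    unfolding cross2_def by (simp_all add: algebra_simps)
  then show ?thesis
    using assms by (simp add: vec_eq_iff forall_2 field_simps)
qed

lemma infdist_line_coords:
  assumes "d \<noteq> 0"
  shows "infdist (p + a *\<^sub>R d + b *\<^sub>R e) (line p d) = \<bar>b\<bar> * \<bar>cross2 d e\<bar> / norm d"
  using assms by (simp add: infdist_line cross2_anticommute[of e d] abs_mult)

lemma disprod_coords:
  assumes "cross2 d e \<noteq> 0"
  shows "disprod (line p d) (line p e) (p + a *\<^sub>R d + b *\<^sub>R e)
    = \<bar>a * b\<bar> * (cross2 d e ^ 2 / (norm d * norm e))"
proof -
  have "d \<noteq> 0" "e \<noteq> 0" using assms by auto
  have "infdist (p + a *\<^sub>R d + b *\<^sub>R e) (line p d) = \<bar>b\<bar> * \<bar>cross2 d e\<bar> / norm d"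
    using \<open>d \<noteq> 0\<close> by (rule infdist_line_coords)
  moreover have "infdist (p + a *\<^sub>R d + b *\<^sub>R e) (line p e) = \<bar>a\<bar> * \<bar>cross2 d e\<bar> / norm e"
    using infdist_line_coords[OF \<open>e \<noteq> 0\<close>, of p b a d]
    by (simp add: algebra_simps cross2_anticommute[of e d])
  ultimately show ?thesis
    unfolding disprod_def dist_line_def by (simp add: power2_eq_square abs_mult)
qed

lemma affine_zero_if_sign_change:
  fixes b b' :: real
  assumes "b * b' \<le> 0"
  obtains s where "0 \<le> s" "s \<le> 1" "(1 - s) * b + s * b' = 0"
proof (cases "b = b'")
  case True
  with assms show ?thesis using that[of 0] by (auto simp: mult_le_0_iff)
next
  case False
  define s where "s = b / (b - b')"
  have "(1 - s) * b + s * b' = 0"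
    unfolding s_def using False by (simp add: field_simps)
  moreover have "0 \<le> s \<and> s \<le> 1"
  proof (cases "b > b'")
    case True
    with assms have "b \<ge> 0" "b' \<le> 0" by (auto simp: mult_le_0_iff)
    with True show ?thesis unfolding s_def by (simp add: divide_le_eq_1)
  next
    case False
    with \<open>b \<noteq> b'\<close> assms have "b < b'" "b \<le> 0" "b' \<ge> 0"
      by (auto simp: mult_le_0_iff)
    then show ?thesis unfolding s_def by (simp add: divide_le_eq_1 divide_nonpos_neg)
  qed
  ultimately show ?thesis using that by auto
qed

lemma coord_sign_if_segment_disjoint_line:
  fixes p d e :: "'a::real_vector"
  assumes "closed_segment (p + a *\<^sub>R d + b *\<^sub>R e) (p + a' *\<^sub>R d + b' *\<^sub>R e) \<inter> line p d = {}"
  shows "b * b' > 0"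
proof (rule ccontr)
  assume "\<not> b * b' > 0"
  then have "b * b' \<le> 0" by simp
  then obtain s where s: "0 \<le> s" "s \<le> 1" "(1 - s) * b + s * b' = 0"
    by (rule affine_zero_if_sign_change)
  define P where "P = (1 - s) *\<^sub>R (p + a *\<^sub>R d + b *\<^sub>R e) + s *\<^sub>R (p + a' *\<^sub>R d + b' *\<^sub>R e)"
  have "P \<in> closed_segment (p + a *\<^sub>R d + b *\<^sub>R e) (p + a' *\<^sub>R d + b' *\<^sub>R e)"
    unfolding P_def closed_segment_def using s by blast
  moreover have "P = p + ((1 - s) * a + s * a') *\<^sub>R d + ((1 - s) * b + s * b') *\<^sub>R e"
    unfolding P_def by (simp add: algebra_simps)
  then have "P \<in> line p d"
    using s(3) unfolding line_def by auto
  ultimately show False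
    using assms by blast
qed

lemma same_quadrant_coords:
  assumes "is_line l" "is_line l'" "l \<noteq> l'" "Ov \<in> l" "Ov \<in> l'"
    and "same_quadrant l l' X X'"
  obtains d e a b a' b' where "cross2 d e \<noteq> 0" "l = line Ov d" "l' = line Ov e"
    "a > 0" "b > 0" "a' > 0" "b' > 0"
    "X = Ov + a *\<^sub>R d + b *\<^sub>R e" "X' = Ov + a' *\<^sub>R d + b' *\<^sub>R e"
proof -
  obtain d0 e0 where "d0 \<noteq> 0" "e0 \<noteq> 0" and l: "l = line Ov d0" and l': "l' = line Ov e0"
    using is_line_through assms(1,2,4,5) by metis
  with assms(3) have D: "cross2 d0 e0 \<noteq> 0"
    using line_eq_iff_cross2_eq_0 by blast
  define a0 b0 a0' b0' where "a0 = cross2 (X - Ov) e0 / cross2 d0 e0"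
    and "b0 = cross2 d0 (X - Ov) / cross2 d0 e0"
    and "a0' = cross2 (X' - Ov) e0 / cross2 d0 e0"
    and "b0' = cross2 d0 (X' - Ov) / cross2 d0 e0"
  have X: "X = Ov + a0 *\<^sub>R d0 + b0 *\<^sub>R e0" and X': "X' = Ov + a0' *\<^sub>R d0 + b0' *\<^sub>R e0"
    using cross2_coords[OF D, of "X - Ov"] cross2_coords[OF D, of "X' - Ov"]
    unfolding a0_def b0_def a0'_def b0'_def by (simp_all add: algebra_simps)
  have "b0 * b0' > 0"
    using assms(6) coord_sign_if_segment_disjoint_line
    unfolding same_quadrant_def same_side_def l X X' by blast
  moreover have "a0 * a0' > 0"
    using assms(6) coord_sign_if_segment_disjoint_line[of Ov b0 e0 a0 d0 b0' a0']
    unfolding same_quadrant_def same_side_def l' X X' by (simp add: algebra_simps)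
  ultimately have "sgn b0' = sgn b0" "sgn a0' = sgn a0" "b0 \<noteq> 0" "a0 \<noteq> 0"
    by (auto simp: sgn_if zero_less_mult_iff)
  show thesis
  proof (rule that[of "sgn a0 *\<^sub>R d0" "sgn b0 *\<^sub>R e0" "\<bar>a0\<bar>" "\<bar>b0\<bar>" "\<bar>a0'\<bar>" "\<bar>b0'\<bar>"])
    show "cross2 (sgn a0 *\<^sub>R d0) (sgn b0 *\<^sub>R e0) \<noteq> 0"
      using D \<open>a0 \<noteq> 0\<close> \<open>b0 \<noteq> 0\<close> by (simp add: sgn_if)
    show "l = line Ov (sgn a0 *\<^sub>R d0)" "l' = line Ov (sgn b0 *\<^sub>R e0)"
      using l l' \<open>a0 \<noteq> 0\<close> \<open>b0 \<noteq> 0\<close> by (simp_all add: line_scaleR sgn_if)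
    show "X = Ov + \<bar>a0\<bar> *\<^sub>R sgn a0 *\<^sub>R d0 + \<bar>b0\<bar> *\<^sub>R sgn b0 *\<^sub>R e0"
      unfolding X by (simp add: mult.commute[of "\<bar>_\<bar>"] mult_sgn_abs)
    show "X' = Ov + \<bar>a0'\<bar> *\<^sub>R sgn a0 *\<^sub>R d0 + \<bar>b0'\<bar> *\<^sub>R sgn b0 *\<^sub>R e0"
      unfolding X' \<open>sgn a0' = sgn a0\<close>[symmetric] \<open>sgn b0' = sgn b0\<close>[symmetric]
      by (simp add: mult.commute[of "\<bar>_\<bar>"] mult_sgn_abs)
  qed (use \<open>a0 * a0' > 0\<close> \<open>b0 * b0' > 0\<close> in \<open>auto simp: zero_less_mult_iff\<close>)
qed

lemma line_inter_reflected_line: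
  assumes "cross2 d e \<noteq> 0" and "Y \<in> line p d"
    and "Y \<in> point_reflect (midpoint (p + a *\<^sub>R d + b *\<^sub>R e) (p + a' *\<^sub>R d + b' *\<^sub>R e)) ` line p e"
  shows "Y = p + (a + a') *\<^sub>R d"
proof -
  obtain t where Y: "Y = p + t *\<^sub>R d"
    using assms(2) unfolding line_def by blast
  obtain s where "Y = point_reflect (midpoint (p + a *\<^sub>R d + b *\<^sub>R e) (p + a' *\<^sub>R d + b' *\<^sub>R e))
      (p + s *\<^sub>R e)"
    using assms(3) unfolding line_def by blast
  then have "t *\<^sub>R d + 0 *\<^sub>R e = (a + a') *\<^sub>R d + (b + b' - s) *\<^sub>R e"
    unfolding Y point_reflect_def midpoint_def by (simp add: algebra_simps)
  then have "t = a + a'"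
    by (rule cross2_coords_unique(1)[OF assms(1)])
  then show ?thesis using Y by simp
qed

text \<open>A point \<open>p + u (a + a') d + v (b + b') e\<close> of the triangle has \<open>u, v \<ge> 0\<close> and
  \<open>u + v \<le> 1\<close>; for \<open>X\<close> this forces \<open>u = a / (a + a')\<close> and \<open>v = b / (b + b')\<close>.\<close>
lemma mem_triangle_coords_iff:
  assumes "cross2 d e \<noteq> 0" "a > 0" "b > 0" "a' > 0" "b' > 0"
  shows "p + a *\<^sub>R d + b *\<^sub>R e \<in> convex hull {p, p + (a + a') *\<^sub>R d, p + (b + b') *\<^sub>R e}
    \<longleftrightarrow> a * b \<le> a' * b'"
proof -
  have combination: "w *\<^sub>R p + u *\<^sub>R (p + (a + a') *\<^sub>R d) + v *\<^sub>R (p + (b + b') *\<^sub>R e)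
      = p + (u * (a + a')) *\<^sub>R d + (v * (b + b')) *\<^sub>R e" if "w + u + v = 1" for w u v
    using that by (simp add: algebra_simps flip: scaleR_add_left)
  have "a / (a + a') + b / (b + b') = (a * (b + b') + b * (a + a')) / ((a + a') * (b + b'))"
    using assms(2-5) by (simp add: field_simps)
  moreover have "(a + a') * (b + b') > 0"
    using assms(2-5) by simp
  ultimately have key: "a * b \<le> a' * b' \<longleftrightarrow> a / (a + a') + b / (b + b') \<le> 1"
    by (simp add: pos_divide_le_eq del: mult_pos_pos) (simp add: algebra_simps)
  show ?thesis
  proof
    assume "p + a *\<^sub>R d + b *\<^sub>R e \<in> convex hull {p, p + (a + a') *\<^sub>R d, p + (b + b') *\<^sub>R e}"
    then obtain w u v where "0 \<le> w" "0 \<le> u" "0 \<le> v" "w + u + v = 1"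
      and "p + a *\<^sub>R d + b *\<^sub>R e = p + (u * (a + a')) *\<^sub>R d + (v * (b + b')) *\<^sub>R e"
      unfolding convex_hull_3 using combination by auto
    then have "a = u * (a + a')" "b = v * (b + b')"
      using cross2_coords_unique[OF assms(1)] by (simp_all add: add.assoc)
    then have "a / (a + a') = u" "b / (b + b') = v"
      using assms(2-5) by (simp_all add: divide_eq_eq)
    with \<open>0 \<le> w\<close> \<open>w + u + v = 1\<close> show "a * b \<le> a' * b'"
      unfolding key by linarith
  next
    assume "a * b \<le> a' * b'"
    then have "0 \<le> 1 - a / (a + a') - b / (b + b')"
      unfolding key by simp
    moreover have "0 \<le> a / (a + a')" "0 \<le> b / (b + b')"
      using assms(2-5) by simp_all
    moreover have "p + a *\<^sub>R d + b *\<^sub>R e = (1 - a / (a + a') - b / (b + b')) *\<^sub>R p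
        + (a / (a + a')) *\<^sub>R (p + (a + a') *\<^sub>R d) + (b / (b + b')) *\<^sub>R (p + (b + b') *\<^sub>R e)"
      using assms(2-5) by (subst combination) simp_all
    ultimately show "p + a *\<^sub>R d + b *\<^sub>R e \<in> convex hull {p, p + (a + a') *\<^sub>R d, p + (b + b') *\<^sub>R e}"
      unfolding convex_hull_3 by fastforce
  qed
qed

lemma collinear_parallelogram_coords:
  fixes p d e :: "'a::real_vector"
  assumes "a > 0" "b > 0" "a' > 0" "b' > 0" "a * b = a' * b'"
  shows "collinear {p + a *\<^sub>R d + b *\<^sub>R e, p + (a + a') *\<^sub>R d,
    p + a' *\<^sub>R d + b' *\<^sub>R e, p + (b + b') *\<^sub>R e}"
proof -
  let ?Y = "p + (a + a') *\<^sub>R d" and ?Y' = "p + (b + b') *\<^sub>R e"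
  have on_segment: "?Y + c *\<^sub>R (?Y' - ?Y) = p + ((a + a') * (1 - c)) *\<^sub>R d + (c * (b + b')) *\<^sub>R e"
    for c by (simp add: algebra_simps)
  have "(a + a') * (1 - b / (b + b')) = a" "(a + a') * (1 - b' / (b + b')) = a'"
    using assms by (simp_all add: field_simps)
  then have "p + a *\<^sub>R d + b *\<^sub>R e = ?Y + (b / (b + b')) *\<^sub>R (?Y' - ?Y)"
    "p + a' *\<^sub>R d + b' *\<^sub>R e = ?Y + (b' / (b + b')) *\<^sub>R (?Y' - ?Y)"
    using assms unfolding on_segment by simp_all
  moreover have "?Y = ?Y + 0 *\<^sub>R (?Y' - ?Y)" "?Y' = ?Y + 1 *\<^sub>R (?Y' - ?Y)"
    by simp_all
  ultimately show ?thesis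
    unfolding collinear_alt by blast
qed

theorem lemma8:
  fixes l l' :: "point set" and Ov X X' M Y Y' :: point
  assumes "is_line l" and "is_line l'" and "l \<noteq> l'"
    and "Ov \<in> l" and "Ov \<in> l'"
    and "same_quadrant l l' X X'"
    and "M = midpoint X X'"
    and "Y \<in> l" and "Y \<in> point_reflect M ` l'"
    and "Y' \<in> l'" and "Y' \<in> point_reflect M ` l"
  shows "(disprod l l' X < disprod l l' X' \<longrightarrow>
            X \<in> convex hull {Ov, Y, Y'} \<and> X' \<notin> convex hull {Ov, Y, Y'})
       \<and> (disprod l l' X > disprod l l' X' \<longrightarrow>
            X \<notin> convex hull {Ov, Y, Y'} \<and> X' \<in> convex hull {Ov, Y, Y'})
       \<and> (disprod l l' X = disprod l l' X' \<longrightarrow> collinear {X, Y, X', Y'})"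
proof -
  obtain d e a b a' b' where D: "cross2 d e \<noteq> 0" and l: "l = line Ov d" and l': "l' = line Ov e"
    and pos: "a > 0" "b > 0" "a' > 0" "b' > 0"
    and X: "X = Ov + a *\<^sub>R d + b *\<^sub>R e" and X': "X' = Ov + a' *\<^sub>R d + b' *\<^sub>R e"
    using same_quadrant_coords[OF assms(1-6)] by blast
  have Y: "Y = Ov + (a + a') *\<^sub>R d"
    using line_inter_reflected_line[OF D] assms(7-9) unfolding l l' X X' by blast
  have "cross2 e d \<noteq> 0" "X = Ov + b *\<^sub>R e + a *\<^sub>R d" "X' = Ov + b' *\<^sub>R e + a' *\<^sub>R d"
    using D X X' by (simp_all add: cross2_anticommute[of e d] algebra_simps)
  then have Y': "Y' = Ov + (b + b') *\<^sub>R e"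
    using line_inter_reflected_line assms(7,10,11) unfolding l l' by metis
  define k where "k = (cross2 d e)\<^sup>2 / (norm d * norm e)"
  have "d \<noteq> 0" "e \<noteq> 0"
    using D by auto
  with D have "k > 0"
    unfolding k_def by (simp add: divide_pos_pos)
  have "disprod l l' X = a * b * k" "disprod l l' X' = a' * b' * k"
    unfolding l l' X X' k_def disprod_coords[OF D] using pos by simp_all
  moreover have "X \<in> convex hull {Ov, Y, Y'} \<longleftrightarrow> a * b \<le> a' * b'"
    unfolding X Y Y' using mem_triangle_coords_iff[OF D pos] .
  moreover have "X' \<in> convex hull {Ov, Y, Y'} \<longleftrightarrow> a' * b' \<le> a * b"
    unfolding X' Y Y' using mem_triangle_coords_iff[OF D pos(3,4,1,2)] by (simp add: add.commute)
  moreover have "a * b = a' * b' \<Longrightarrow> collinear {X, Y, X', Y'}"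
    unfolding X X' Y Y' using collinear_parallelogram_coords[OF pos] .
  ultimately show ?thesis
    using \<open>k > 0\<close> by auto
qed

end
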